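(* Let $n\ge2$ and $\mathbf{q}\in(\Bbbk^\times)^n$; indices are modulo $n$. (1) Let $\alpha_0,\dots,\alpha_{n-1}\in\Bbbk^\times$ and set $p_i=\frac{\alpha_{i+1}}{\alpha_i}q_i$ for $0\le i<n$. The linear map $\phi_\alpha:B_n(\mathbf{q})\to B_n(\mathbf{p})$ with $\phi_\alpha(e_i)=e_i$, $\phi_\alpha(a_i)=a_i$, $\phi_\alpha(b_i)=\alpha_ib_i$ extends to an isomorphism. (2) Set $p_i=q_{i-1}$ for $0\le i<n$. The linear map $\psi:B_n(\mathbf{q})\to B_n(\mathbf{p})$ with $\psi(e_i)=e_{i+1}$, $\psi(a_i)=a_{i+1}$, $\psi(b_i)=b_{i+1}$ extends to an isomorphism.
   Context: $\Bbbk$ is an algebraically closed field of characteristic zero. Paths are written left to right. $B_n(\mathbf{q})=\Bbbk Q/(b_ia_i-q_ia_ib_{i+1},\ i=0,\dots,n-1)$, where $Q$ has vertices $e_0,\dots,e_{n-1}$, arrows $a_i:e_i\to e_{i+1}$ and loops $b_i$ at $e_i$, indices modulo $n$. *)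

theory Defs
  imports "HOL-Algebra.QuotRing" "HOL-Computational_Algebra.Polynomial"
begin

text \<open>Arrows of the quiver Q: Aa i is a_i : e_i -> e_(i+1), Bb i is the loop b_i at e_i.\<close>
datatype arr = Aa nat | Bb nat

fun arr_ok :: "nat \<Rightarrow> arr \<Rightarrow> bool" where
  "arr_ok n (Aa i) = (i < n)"
| "arr_ok n (Bb i) = (i < n)"

fun src :: "arr \<Rightarrow> nat" where
  "src (Aa i) = i"
| "src (Bb i) = i"

fun tgt :: "nat \<Rightarrow> arr \<Rightarrow> nat" where
  "tgt n (Aa i) = (Suc i) mod n"
| "tgt n (Bb i) = i"

text \<open>A path is (start vertex, list of arrows, written left to right).\<close>
type_synonym path = "nat \<times> arr list"

fun chain :: "nat \<Rightarrow> nat \<Rightarrow> arr list \<Rightarrow> bool" where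
  "chain n v [] = True"
| "chain n v (x # xs) = (arr_ok n x \<and> src x = v \<and> chain n (tgt n x) xs)"

definition valid_path :: "nat \<Rightarrow> path \<Rightarrow> bool" where
  "valid_path n p = (fst p < n \<and> chain n (fst p) (snd p))"

definition path_end :: "nat \<Rightarrow> path \<Rightarrow> nat" where
  "path_end n p = foldl (\<lambda>w x. tgt n x) (fst p) (snd p)"

text \<open>Concatenation of paths (left to right); None means the product is zero.\<close>
definition pmul :: "nat \<Rightarrow> path \<Rightarrow> path \<Rightarrow> path option" where
  "pmul n p r = (if path_end n p = fst r then Some (fst p, snd p @ snd r) else None)"

text \<open>The path algebra kQ: finitely supported k-valued functions on valid paths.\<close>
definition path_ring :: "nat \<Rightarrow> (path \<Rightarrow> 'k::field) ring" where
  "path_ring n = \<lparr>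
     carrier = {f. finite {p. f p \<noteq> 0} \<and> (\<forall>p. f p \<noteq> 0 \<longrightarrow> valid_path n p)},
     monoid.mult = (\<lambda>f g. \<lambda>p. \<Sum>(p1, p2) \<in> {(p1, p2). f p1 \<noteq> 0 \<and> g p2 \<noteq> 0 \<and> pmul n p1 p2 = Some p}.
                        f p1 * g p2),
     one = (\<lambda>p. if snd p = [] \<and> fst p < n then 1 else 0),
     zero = (\<lambda>p. 0),
     add = (\<lambda>f g. \<lambda>p. f p + g p) \<rparr>"

definition smul :: "'k::field \<Rightarrow> (path \<Rightarrow> 'k) \<Rightarrow> (path \<Rightarrow> 'k)" where
  "smul c f = (\<lambda>p. c * f p)"

definition pth :: "path \<Rightarrow> (path \<Rightarrow> 'k::field)" where
  "pth p = (\<lambda>x. if x = p then 1 else 0)"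

definition vtx :: "nat \<Rightarrow> nat \<Rightarrow> (path \<Rightarrow> 'k::field)" where
  "vtx n i = pth (i mod n, [])"

definition arrA :: "nat \<Rightarrow> nat \<Rightarrow> (path \<Rightarrow> 'k::field)" where
  "arrA n i = pth (i mod n, [Aa (i mod n)])"

definition loopB :: "nat \<Rightarrow> nat \<Rightarrow> (path \<Rightarrow> 'k::field)" where
  "loopB n i = pth (i mod n, [Bb (i mod n)])"

definition rel :: "nat \<Rightarrow> (nat \<Rightarrow> 'k::field) \<Rightarrow> nat \<Rightarrow> (path \<Rightarrow> 'k)" where
  "rel n q i = (\<lambda>p. pth (i, [Bb i, Aa i]) p - q i * pth (i, [Aa i, Bb (Suc i mod n)]) p)"

definition Irel :: "nat \<Rightarrow> (nat \<Rightarrow> 'k::field) \<Rightarrow> (path \<Rightarrow> 'k) set" where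
  "Irel n q = genideal (path_ring n) {rel n q i | i. i < n}"

definition Bn :: "nat \<Rightarrow> (nat \<Rightarrow> 'k::field) \<Rightarrow> (path \<Rightarrow> 'k) set ring" where
  "Bn n q = path_ring n Quot Irel n q"

definition cls :: "nat \<Rightarrow> (nat \<Rightarrow> 'k::field) \<Rightarrow> (path \<Rightarrow> 'k) \<Rightarrow> (path \<Rightarrow> 'k) set" where
  "cls n q f = Irel n q +>\<^bsub>path_ring n\<^esub> f"

text \<open>k-algebra isomorphism B_n(q) -> B_n(p): ring isomorphism that is k-linear,
  i.e. fixes the scalars c*1.\<close>
definition k_alg_iso :: "nat \<Rightarrow> (nat \<Rightarrow> 'k::field) \<Rightarrow> (nat \<Rightarrow> 'k)
    \<Rightarrow> ((path \<Rightarrow> 'k) set \<Rightarrow> (path \<Rightarrow> 'k) set) \<Rightarrow> bool" where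
  "k_alg_iso n q p h = (h \<in> ring_iso (Bn n q) (Bn n p) \<and>
     (\<forall>c. h (cls n q (smul c \<one>\<^bsub>path_ring n\<^esub>)) = cls n p (smul c \<one>\<^bsub>path_ring n\<^esub>)))"

definition alg_closed :: "'k::field itself \<Rightarrow> bool" where
  "alg_closed _ = (\<forall>f :: 'k poly. degree f > 0 \<longrightarrow> (\<exists>x. poly f x = 0))"

end

theory Submission
  imports Defs
begin

text \<open>Both maps come from a weighted relabelling of the quiver: a bijection \<sigma> of the vertices
  commuting with i \<mapsto> i + 1 mod n, together with nonzero weights b_i on the loops. It extends to
  a ring automorphism \<Phi> of the path algebra sending a path r to \<sigma>(r) times the product of the
  weights of the loops in r. If p_(\<sigma> i) b_i = q_i b_(i+1), then \<Phi> sends the relation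
  b_i a_i - q_i a_i b_(i+1) for q to b_i times the relation at \<sigma> i for p; since \<sigma> is a
  bijection, \<Phi> maps the ideal of relations for q onto the one for p and descends to the
  quotients. Part (1) is \<sigma> = id with weights \<alpha>, part (2) is \<sigma> i = i + 1 with weights 1.\<close>

section \<open>The path algebra\<close>

lemma foldl_tgt_eq: "foldl (\<lambda>w x. tgt n x) v xs = (if xs = [] then v else tgt n (last xs))"
  by (induction xs arbitrary: v) auto

lemma path_end_eq: "path_end n p = (if snd p = [] then fst p else tgt n (last (snd p)))"
  by (simp add: path_end_def foldl_tgt_eq)

lemma chain_arr_ok: "chain n v xs \<Longrightarrow> x \<in> set xs \<Longrightarrow> arr_ok n x"
  by (induction xs arbitrary: v) auto

lemma path_ring_carrier_iff:
  "f \<in> carrier (path_ring n) \<longleftrightarrow> finite {p. f p \<noteq> 0} \<and> (\<forall>p. f p \<noteq> 0 \<longrightarrow> valid_path n p)"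
  by (simp add: path_ring_def)

lemma valid_path_if_nonzero: "f \<in> carrier (path_ring n) \<Longrightarrow> f p \<noteq> 0 \<Longrightarrow> valid_path n p"
  by (cases p) (simp add: path_ring_def)

lemma pth_in_carrier: "valid_path n r \<Longrightarrow> pth r \<in> carrier (path_ring n)"
proof -
  assume "valid_path n r"
  moreover have "{p. pth r p \<noteq> (0::'k::field)} \<subseteq> {r}" by (auto simp: pth_def)
  ultimately show ?thesis by (auto simp: path_ring_def pth_def intro: finite_subset)
qed

lemma rel_in_carrier: "i < n \<Longrightarrow> rel n q i \<in> carrier (path_ring n)"
proof -
  assume "i < n"
  then have "valid_path n (i, [Bb i, Aa i])" "valid_path n (i, [Aa i, Bb (Suc i mod n)])"
    by (auto simp: valid_path_def)
  moreover have "{p. rel n q i p \<noteq> 0} \<subseteq> {(i, [Bb i, Aa i]), (i, [Aa i, Bb (Suc i mod n)])}"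
    by (auto simp: rel_def pth_def)
  ultimately show ?thesis
    by (auto simp: path_ring_def rel_def pth_def intro: finite_subset split: if_splits)
qed

lemma smul_one_in_carrier: "smul c \<one>\<^bsub>path_ring n\<^esub> \<in> carrier (path_ring n)"
proof -
  have "{p. smul c \<one>\<^bsub>path_ring n\<^esub> p \<noteq> 0} \<subseteq> (\<lambda>v. (v, [])) ` {..<n}"
    by (auto simp: smul_def path_ring_def split: if_splits)
  then show ?thesis
    by (auto simp: path_ring_def smul_def valid_path_def intro: finite_subset split: if_splits)
qed

lemma smul_eq_mult:
  assumes f: "f \<in> carrier (path_ring n)"
  shows "smul c f = smul c \<one>\<^bsub>path_ring n\<^esub> \<otimes>\<^bsub>path_ring n\<^esub> f"
proof (cases "c = 0")
  case True
  then show ?thesis by (simp add: smul_def path_ring_def)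
next
  case False
  show ?thesis
  proof
    fix p :: path
    let ?A = "{(p1, p2). smul c \<one>\<^bsub>path_ring n\<^esub> p1 \<noteq> 0 \<and> f p2 \<noteq> 0 \<and> pmul n p1 p2 = Some p}"
    have "?A = (if f p \<noteq> 0 then {((fst p, []), p)} else {})"
    proof (cases "f p = 0")
      case True
      then show ?thesis using False by (auto simp: smul_def path_ring_def pmul_def path_end_def)
    next
      case fp: False
      then have "valid_path n p" using f valid_path_if_nonzero by blast
      then show ?thesis using False fp
        by (auto simp: smul_def path_ring_def pmul_def path_end_def valid_path_def split: if_splits)
    qed
    then show "smul c f p = (smul c \<one>\<^bsub>path_ring n\<^esub> \<otimes>\<^bsub>path_ring n\<^esub> f) p"
      using False valid_path_if_nonzero[OF f, of p] by (auto simp: path_ring_def smul_def valid_path_def)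
  qed
qed

lemma smul_smul: "smul a (smul c f) = smul (a * c) f"
  by (simp add: smul_def fun_eq_iff)

lemma smul_one [simp]: "smul 1 f = f"
  by (simp add: smul_def)

lemma smul_in_carrier: "f \<in> carrier (path_ring n) \<Longrightarrow> smul c f \<in> carrier (path_ring n)"
  by (auto simp: path_ring_def smul_def intro: finite_subset)

lemma smul_in_ideal:
  assumes I: "ideal I (path_ring n)" and f: "f \<in> I"
  shows "smul c f \<in> I"
proof -
  have "f \<in> carrier (path_ring n)" using ideal.Icarr[OF I f] .
  then show ?thesis using smul_eq_mult ideal.I_l_closed[OF I f smul_one_in_carrier] by metis
qed

section \<open>Weighted relabellings of the quiver\<close>

fun map_arr :: "(nat \<Rightarrow> nat) \<Rightarrow> arr \<Rightarrow> arr" where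
  "map_arr s (Aa i) = Aa (s i)"
| "map_arr s (Bb i) = Bb (s i)"

definition map_path :: "(nat \<Rightarrow> nat) \<Rightarrow> path \<Rightarrow> path" where
  "map_path s p = (s (fst p), map (map_arr s) (snd p))"

fun arr_weight :: "(nat \<Rightarrow> 'k::field) \<Rightarrow> arr \<Rightarrow> 'k" where
  "arr_weight b (Aa i) = 1"
| "arr_weight b (Bb i) = b i"

definition loop_weight :: "(nat \<Rightarrow> 'k::field) \<Rightarrow> arr list \<Rightarrow> 'k" where
  "loop_weight b xs = prod_list (map (arr_weight b) xs)"

lemma loop_weight_append: "loop_weight b (xs @ ys) = loop_weight b xs * loop_weight b ys"
  by (simp add: loop_weight_def)

lemma loop_weight_nonzero:
  "chain n v xs \<Longrightarrow> (\<And>i. i < n \<Longrightarrow> b i \<noteq> 0) \<Longrightarrow> loop_weight b xs \<noteq> 0"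
proof (induction xs arbitrary: v)
  case (Cons x xs)
  then show ?case by (cases x) (auto simp: loop_weight_def)
qed (simp add: loop_weight_def)

text \<open>\<tau> is the inverse of the vertex relabelling \<sigma>, so that relabel \<tau> b (pth r)
  is a multiple of pth (map_path \<sigma> r).\<close>
definition relabel :: "(nat \<Rightarrow> nat) \<Rightarrow> (nat \<Rightarrow> 'k::field) \<Rightarrow> (path \<Rightarrow> 'k) \<Rightarrow> path \<Rightarrow> 'k" where
  "relabel \<tau> b f = (\<lambda>p. loop_weight b (snd (map_path \<tau> p)) * f (map_path \<tau> p))"

locale cyclic_relabelling =
  fixes n :: nat and \<sigma> \<tau> :: "nat \<Rightarrow> nat"
  assumes inv_left: "\<And>i. \<tau> (\<sigma> i) = i" and inv_right: "\<And>i. \<sigma> (\<tau> i) = i"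
    and \<sigma>_less: "\<And>i. i < n \<Longrightarrow> \<sigma> i < n" and \<tau>_less: "\<And>i. i < n \<Longrightarrow> \<tau> i < n"
    and \<sigma>_Suc: "\<And>i. i < n \<Longrightarrow> \<sigma> (Suc i mod n) = Suc (\<sigma> i) mod n"
begin

lemma \<sigma>_less_iff: "\<sigma> i < n \<longleftrightarrow> i < n"
  using \<sigma>_less \<tau>_less inv_left by metis

lemma \<sigma>_eq_iff: "\<sigma> i = \<sigma> j \<longleftrightarrow> i = j"
  using inv_left by metis

lemma cyclic_relabelling_inverse: "cyclic_relabelling n \<tau> \<sigma>"
proof
  fix i assume i: "i < n"
  then have "\<sigma> (Suc (\<tau> i) mod n) = Suc i mod n" using \<sigma>_Suc[OF \<tau>_less[OF i]] inv_right by simp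
  then show "\<tau> (Suc i mod n) = Suc (\<tau> i) mod n" using inv_left by metis
qed (use inv_left inv_right \<sigma>_less \<tau>_less in auto)

lemma map_arr_inverse [simp]: "map_arr \<tau> (map_arr \<sigma> x) = x"
  by (cases x) (auto simp: inv_left)

lemma map_path_left_inverse [simp]: "map_path \<tau> (map_path \<sigma> r) = r"
  by (simp add: map_path_def comp_def inv_left)

lemma arr_ok_map_arr [simp]: "arr_ok n (map_arr \<sigma> x) = arr_ok n x"
  by (cases x) (auto simp: \<sigma>_less_iff)

lemma tgt_map_arr: "arr_ok n x \<Longrightarrow> tgt n (map_arr \<sigma> x) = \<sigma> (tgt n x)"
  by (cases x) (auto simp: \<sigma>_Suc)

lemma chain_map_arr: "chain n (\<sigma> v) (map (map_arr \<sigma>) xs) = chain n v xs"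
proof (induction xs arbitrary: v)
  case (Cons x xs)
  have "src (map_arr \<sigma> x) = \<sigma> (src x)" by (cases x) auto
  then show ?case using Cons by (auto simp: tgt_map_arr \<sigma>_eq_iff)
qed simp

lemma valid_path_map_path [simp]: "valid_path n (map_path \<sigma> r) = valid_path n r"
  by (simp add: valid_path_def map_path_def \<sigma>_less_iff chain_map_arr)

lemma path_end_map_path: "valid_path n r \<Longrightarrow> path_end n (map_path \<sigma> r) = \<sigma> (path_end n r)"
  using chain_arr_ok[of n "fst r" "snd r" "last (snd r)"]
  by (auto simp: path_end_eq map_path_def last_map valid_path_def tgt_map_arr)

lemma pmul_map_path:
  "valid_path n r1 \<Longrightarrow> pmul n (map_path \<sigma> r1) (map_path \<sigma> r2) = map_option (map_path \<sigma>) (pmul n r1 r2)"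
proof -
  assume "valid_path n r1"
  moreover have "\<sigma> (path_end n r1) = \<sigma> (fst r2) \<longleftrightarrow> path_end n r1 = fst r2" by (rule \<sigma>_eq_iff)
  ultimately show ?thesis using path_end_map_path by (auto simp: pmul_def map_path_def)
qed

end

locale weighted_relabelling = cyclic_relabelling +
  fixes b :: "nat \<Rightarrow> 'k::field"
  assumes b_nonzero: "\<And>i. i < n \<Longrightarrow> b i \<noteq> 0"
begin

abbreviation \<Phi> :: "(path \<Rightarrow> 'k) \<Rightarrow> path \<Rightarrow> 'k" where
  "\<Phi> \<equiv> relabel \<tau> b"

abbreviation \<Psi> :: "(path \<Rightarrow> 'k) \<Rightarrow> path \<Rightarrow> 'k" where
  "\<Psi> \<equiv> relabel \<sigma> (\<lambda>i. inverse (b (\<tau> i)))"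

lemma weighted_relabelling_inverse: "weighted_relabelling n \<tau> \<sigma> (\<lambda>i. inverse (b (\<tau> i)))"
  using cyclic_relabelling_inverse b_nonzero cyclic_relabelling.\<sigma>_less_iff[OF cyclic_relabelling_inverse]
  by (simp add: weighted_relabelling_def weighted_relabelling_axioms_def)

lemma map_path_right_inverse [simp]: "map_path \<sigma> (map_path \<tau> r) = r"
  using cyclic_relabelling.map_path_left_inverse[OF cyclic_relabelling_inverse] .

lemma loop_weight_valid_nonzero: "valid_path n r \<Longrightarrow> loop_weight b (snd r) \<noteq> 0"
  using loop_weight_nonzero b_nonzero by (auto simp: valid_path_def)

lemma loop_weight_inverse:
  "loop_weight (\<lambda>i. inverse (b (\<tau> i))) (map (map_arr \<sigma>) xs) = inverse (loop_weight b xs)"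
proof (induction xs)
  case (Cons x xs)
  then show ?case by (cases x) (auto simp: loop_weight_def inv_left inverse_mult_distrib)
qed (simp add: loop_weight_def)

lemma relabel_map_path [simp]: "\<Phi> f (map_path \<sigma> r) = loop_weight b (snd r) * f r"
  by (simp add: relabel_def)

lemma relabel_nonzero: "\<Phi> f p \<noteq> 0 \<Longrightarrow> f (map_path \<tau> p) \<noteq> 0"
  by (auto simp: relabel_def)

lemma relabel_pth: "\<Phi> (pth r) = smul (loop_weight b (snd r)) (pth (map_path \<sigma> r))"
proof
  fix p
  have "map_path \<tau> p = r \<longleftrightarrow> p = map_path \<sigma> r" by auto
  then show "\<Phi> (pth r) p = smul (loop_weight b (snd r)) (pth (map_path \<sigma> r)) p"
    by (auto simp: relabel_def smul_def pth_def)
qed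

lemma relabel_smul: "\<Phi> (smul c f) = smul c (\<Phi> f)"
  by (simp add: relabel_def smul_def fun_eq_iff algebra_simps)

lemma relabel_rel:
  assumes i: "i < n" and pq: "p (\<sigma> i) * b i = q i * b (Suc i mod n)"
  shows "\<Phi> (rel n q i) = smul (b i) (rel n p (\<sigma> i))"
proof -
  have "\<Phi> (\<lambda>x. f x - c * g x) = (\<lambda>x. \<Phi> f x - c * \<Phi> g x)" for f g c
    by (simp add: relabel_def fun_eq_iff algebra_simps)
  then have "\<Phi> (rel n q i) = (\<lambda>x. b i * pth (\<sigma> i, [Bb (\<sigma> i), Aa (\<sigma> i)]) x
      - q i * b (Suc i mod n) * pth (\<sigma> i, [Aa (\<sigma> i), Bb (Suc (\<sigma> i) mod n)]) x)"
    using i unfolding rel_def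
    by (simp add: relabel_pth map_path_def loop_weight_def \<sigma>_Suc smul_def mult.assoc)
  also have "\<dots> = smul (b i) (rel n p (\<sigma> i))"
  proof -
    have "q i * b (Suc i mod n) = b i * p (\<sigma> i)" using pq by (simp add: mult.commute)
    then show ?thesis by (simp add: rel_def smul_def fun_eq_iff right_diff_distrib mult.assoc)
  qed
  finally show ?thesis .
qed

lemma relabel_one: "\<Phi> \<one>\<^bsub>path_ring n\<^esub> = \<one>\<^bsub>path_ring n\<^esub>"
proof
  fix p :: path
  have "\<tau> (fst p) < n \<longleftrightarrow> fst p < n" using cyclic_relabelling.\<sigma>_less_iff[OF cyclic_relabelling_inverse] .
  then show "\<Phi> \<one>\<^bsub>path_ring n\<^esub> p = \<one>\<^bsub>path_ring n\<^esub> p"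
    by (simp add: relabel_def path_ring_def map_path_def loop_weight_def)
qed

lemma relabel_in_carrier: "f \<in> carrier (path_ring n) \<Longrightarrow> \<Phi> f \<in> carrier (path_ring n)"
proof -
  assume f: "f \<in> carrier (path_ring n)"
  have "{p. \<Phi> f p \<noteq> 0} \<subseteq> map_path \<sigma> ` {p. f p \<noteq> 0}"
    using relabel_nonzero map_path_right_inverse by (metis (mono_tags) mem_Collect_eq image_eqI subsetI)
  moreover have "valid_path n p" if "\<Phi> f p \<noteq> 0" for p
    using valid_path_map_path[of "map_path \<tau> p"] valid_path_if_nonzero[OF f relabel_nonzero[OF that]]
    by simp
  ultimately show ?thesis using f by (auto simp: path_ring_carrier_iff intro: finite_subset)
qed

lemma relabel_left_inverse: "f \<in> carrier (path_ring n) \<Longrightarrow> \<Psi> (\<Phi> f) = f"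
proof
  fix p assume f: "f \<in> carrier (path_ring n)"
  show "\<Psi> (\<Phi> f) p = f p"
  proof (cases "f p = 0")
    case False
    then have "valid_path n p" using f valid_path_if_nonzero by blast
    then show ?thesis using loop_weight_valid_nonzero[of p]
      by (simp add: relabel_def loop_weight_inverse map_path_def comp_def inv_left)
  qed (simp add: relabel_def map_path_def comp_def inv_left)
qed

lemma relabel_mult:
  assumes f: "f \<in> carrier (path_ring n)" and g: "g \<in> carrier (path_ring n)"
  shows "\<Phi> (f \<otimes>\<^bsub>path_ring n\<^esub> g) = \<Phi> f \<otimes>\<^bsub>path_ring n\<^esub> \<Phi> g"
proof
  fix p
  let ?t = "map_path \<tau> p"
  let ?B = "{(r1, r2). f r1 \<noteq> 0 \<and> g r2 \<noteq> 0 \<and> pmul n r1 r2 = Some ?t}"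
  let ?A = "{(p1, p2). \<Phi> f p1 \<noteq> 0 \<and> \<Phi> g p2 \<noteq> 0 \<and> pmul n p1 p2 = Some p}"
  \<comment> \<open>Relabelling both factors is a bijection between the factorisations of \<tau>(p) and of p,
    and loop weights are multiplicative under concatenation.\<close>
  have "(\<Sum>(r1, r2)\<in>?B. loop_weight b (snd ?t) * (f r1 * g r2)) = (\<Sum>(p1, p2)\<in>?A. \<Phi> f p1 * \<Phi> g p2)"
  proof (rule sum.reindex_bij_witness[where i = "map_prod (map_path \<tau>) (map_path \<tau>)"
        and j = "map_prod (map_path \<sigma>) (map_path \<sigma>)"])
    fix a assume "a \<in> ?B"
    then obtain r1 r2 where a: "a = (r1, r2)" "f r1 \<noteq> 0" "g r2 \<noteq> 0" "pmul n r1 r2 = Some ?t"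
      by auto
    have v: "valid_path n r1" "valid_path n r2" using a f g valid_path_if_nonzero by blast+
    show "map_prod (map_path \<tau>) (map_path \<tau>) (map_prod (map_path \<sigma>) (map_path \<sigma>) a) = a"
      using a by simp
    show "map_prod (map_path \<sigma>) (map_path \<sigma>) a \<in> ?A"
      using a pmul_map_path[OF v(1), of r2] loop_weight_valid_nonzero[OF v(1)]
        loop_weight_valid_nonzero[OF v(2)] by simp
    have "?t = (fst r1, snd r1 @ snd r2)" using a by (simp add: pmul_def split: if_splits)
    then show "(\<lambda>(p1, p2). \<Phi> f p1 * \<Phi> g p2) (map_prod (map_path \<sigma>) (map_path \<sigma>) a) =
        (\<lambda>(r1, r2). loop_weight b (snd ?t) * (f r1 * g r2)) a"
      using a by (simp add: loop_weight_append algebra_simps)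
  next
    fix c assume "c \<in> ?A"
    then obtain p1 p2 where c: "c = (p1, p2)" "\<Phi> f p1 \<noteq> 0" "\<Phi> g p2 \<noteq> 0" "pmul n p1 p2 = Some p"
      by auto
    have nz: "f (map_path \<tau> p1) \<noteq> 0" "g (map_path \<tau> p2) \<noteq> 0" using c relabel_nonzero by auto
    then have "valid_path n p1"
      using valid_path_if_nonzero[OF f nz(1)] valid_path_map_path[of "map_path \<tau> p1"] by simp
    then show "map_prod (map_path \<tau>) (map_path \<tau>) c \<in> ?B"
      using c nz cyclic_relabelling.pmul_map_path[OF cyclic_relabelling_inverse] by simp
    show "map_prod (map_path \<sigma>) (map_path \<sigma>) (map_prod (map_path \<tau>) (map_path \<tau>) c) = c"
      using c by simp
  qed
  then show "\<Phi> (f \<otimes>\<^bsub>path_ring n\<^esub> g) p = (\<Phi> f \<otimes>\<^bsub>path_ring n\<^esub> \<Phi> g) p"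
    by (simp add: relabel_def path_ring_def sum_distrib_left case_prod_unfold)
qed

lemma relabel_right_inverse: "g \<in> carrier (path_ring n) \<Longrightarrow> \<Phi> (\<Psi> g) = g"
  using weighted_relabelling.relabel_left_inverse[OF weighted_relabelling_inverse, of g]
  by (simp add: inv_left)

lemma relabel_ring_iso: "\<Phi> \<in> ring_iso (path_ring n) (path_ring n)"
proof (rule ring_iso_memI)
  show "\<Phi> (x \<oplus>\<^bsub>path_ring n\<^esub> y) = \<Phi> x \<oplus>\<^bsub>path_ring n\<^esub> \<Phi> y" for x y
    by (simp add: path_ring_def relabel_def fun_eq_iff algebra_simps)
  show "bij_betw \<Phi> (carrier (path_ring n)) (carrier (path_ring n))"
  proof (rule bij_betw_byWitness[where f' = \<Psi>])
    show "\<forall>f \<in> carrier (path_ring n). \<Psi> (\<Phi> f) = f" using relabel_left_inverse by blast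
    show "\<forall>f \<in> carrier (path_ring n). \<Phi> (\<Psi> f) = f" using relabel_right_inverse by blast
    show "\<Phi> ` carrier (path_ring n) \<subseteq> carrier (path_ring n)" using relabel_in_carrier by blast
    show "\<Psi> ` carrier (path_ring n) \<subseteq> carrier (path_ring n)"
      using weighted_relabelling.relabel_in_carrier[OF weighted_relabelling_inverse] by blast
  qed
qed (simp_all add: relabel_in_carrier relabel_mult relabel_one)

end

section \<open>Ideals and quotients under ring isomorphisms\<close>

lemma image_genideal_subset:
  fixes R (structure) and S (structure)
  assumes R: "ring R" and S: "ring S" and h: "h \<in> ring_hom R S"
    and A: "A \<subseteq> carrier R" and B: "B \<subseteq> carrier S" and AB: "h ` A \<subseteq> Idl\<^bsub>S\<^esub> B"
  shows "h ` (Idl A) \<subseteq> Idl\<^bsub>S\<^esub> B"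
proof -
  interpret R: ring R by fact
  interpret S: ring S by fact
  interpret H: ring_hom_ring R S h using ring_hom_ringI2[OF R S h] .
  have "ideal {r \<in> carrier R. h r \<in> Idl\<^bsub>S\<^esub> B} R" by (rule H.ideal_vimage[OF S.genideal_ideal[OF B]])
  moreover have "A \<subseteq> {r \<in> carrier R. h r \<in> Idl\<^bsub>S\<^esub> B}" using A AB by auto
  ultimately have "(Idl A) \<subseteq> {r \<in> carrier R. h r \<in> Idl\<^bsub>S\<^esub> B}" by (rule R.genideal_minimal)
  then show ?thesis by auto
qed

lemma image_genideal_eq:
  fixes R (structure) and S (structure)
  assumes R: "ring R" and S: "ring S" and h: "h \<in> ring_hom R S" and h': "h' \<in> ring_hom S R"
    and inv: "\<And>x. x \<in> carrier S \<Longrightarrow> h (h' x) = x"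
    and A: "A \<subseteq> carrier R" and B: "B \<subseteq> carrier S"
    and AB: "h ` A \<subseteq> Idl\<^bsub>S\<^esub> B" and BA: "h' ` B \<subseteq> Idl A"
  shows "h ` (Idl A) = Idl\<^bsub>S\<^esub> B"
proof
  show "h ` (Idl A) \<subseteq> Idl\<^bsub>S\<^esub> B" using image_genideal_subset[OF R S h A B AB] .
  have "Idl\<^bsub>S\<^esub> B \<subseteq> carrier S"
    using ring.genideal_ideal[OF S B] by (simp add: ideal_def additive_subgroup.a_subset)
  then have "Idl\<^bsub>S\<^esub> B \<subseteq> h ` h' ` (Idl\<^bsub>S\<^esub> B)"
    using inv by (auto intro!: image_eqI[where f = h] imageI)
  also have "\<dots> \<subseteq> h ` (Idl A)" using image_genideal_subset[OF S R h' B A BA] by blast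
  finally show "Idl\<^bsub>S\<^esub> B \<subseteq> h ` (Idl A)" .
qed

lemma FactRing_iso_of_ring_iso:
  assumes R: "ring R" and S: "ring S" and h: "h \<in> ring_iso R S"
    and I: "ideal I R" and J: "ideal J S" and IJ: "h ` I = J"
  shows "\<exists>g. g \<in> ring_iso (R Quot I) (S Quot J) \<and>
    (\<forall>a \<in> carrier R. g (I +>\<^bsub>R\<^esub> a) = J +>\<^bsub>S\<^esub> h a)"
proof -
  interpret R: ring R by fact
  interpret J: ideal J S by fact
  define \<pi> where "\<pi> = (\<lambda>a. J +>\<^bsub>S\<^esub> h a)"
  have hom: "h \<in> ring_hom R S" and bij: "bij_betw h (carrier R) (carrier S)"
    using h by (auto simp: ring_iso_def)
  have "\<pi> \<in> ring_hom R (S Quot J)"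
    using ring_hom_trans[OF hom J.rcos_ring_hom] unfolding \<pi>_def by (simp add: comp_def)
  then interpret \<Pi>: ring_hom_ring R "S Quot J" \<pi>
    using ring_hom_ringI2[OF R J.quotient_is_ring] by simp
  have surj: "\<pi> ` carrier R = carrier (S Quot J)"
  proof
    show "\<pi> ` carrier R \<subseteq> carrier (S Quot J)"
      using hom by (auto simp: \<pi>_def FactRing_def A_RCOSETS_def' ring_hom_def)
    show "carrier (S Quot J) \<subseteq> \<pi> ` carrier R"
    proof
      fix X assume "X \<in> carrier (S Quot J)"
      then obtain b where b: "b \<in> carrier S" "X = J +>\<^bsub>S\<^esub> b"
        by (auto simp: FactRing_def A_RCOSETS_def')
      then obtain a where "a \<in> carrier R" "h a = b" using bij by (metis bij_betw_imp_surj_on imageE)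
      then show "X \<in> \<pi> ` carrier R" using b by (auto simp: \<pi>_def)
    qed
  qed
  have "I \<subseteq> carrier R" using I by (simp add: ideal_def additive_subgroup.a_subset)
  moreover have "J +>\<^bsub>S\<^esub> x = J \<longleftrightarrow> x \<in> J" if "x \<in> carrier S" for x
    using J.a_rcos_self[OF that] J.a_rcos_const by blast
  moreover have "h a \<in> J \<longleftrightarrow> a \<in> I" if "a \<in> carrier R" for a
    using IJ bij that \<open>I \<subseteq> carrier R\<close> by (auto simp: bij_betw_def dest: inj_onD)
  ultimately have "a_kernel R (S Quot J) \<pi> = I"
    using hom by (auto simp: a_kernel_def' \<pi>_def FactRing_def ring_hom_def)
  then show ?thesis
    using \<Pi>.FactRing_iso_set[OF surj] \<Pi>.the_elem_simp
    by (intro exI[of _ "\<lambda>X. the_elem (\<pi> ` X)"]) (simp add: \<pi>_def)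
qed

section \<open>Isomorphisms between the algebras B_n(q)\<close>

lemma Irel_ideal:
  "ring (path_ring n :: (path \<Rightarrow> 'k::field) ring) \<Longrightarrow> ideal (Irel n (q :: nat \<Rightarrow> 'k)) (path_ring n)"
  unfolding Irel_def using rel_in_carrier by (intro ring.genideal_ideal) auto

lemma Irel_eq_UNIV_if_not_ring:
  "\<not> ring (path_ring n :: (path \<Rightarrow> 'k::field) ring) \<Longrightarrow> Irel n (q :: nat \<Rightarrow> 'k) = UNIV"
  unfolding Irel_def genideal_def by (auto dest: ideal.axioms(2))

lemma cls_eq_UNIV_if_not_ring:
  assumes "\<not> ring (path_ring n :: (path \<Rightarrow> 'k::field) ring)"
  shows "cls n (q :: nat \<Rightarrow> 'k) f = UNIV"
proof -
  have "x \<in> UNIV +>\<^bsub>path_ring n\<^esub> f" for x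
    unfolding a_r_coset_def r_coset_def
    by (rule UN_I[of "\<lambda>p. x p - f p"]) (auto simp: path_ring_def)
  then show ?thesis unfolding cls_def Irel_eq_UNIV_if_not_ring[OF assms] by auto
qed

lemma k_alg_iso_id_if_not_ring:
  assumes "\<not> ring (path_ring n :: (path \<Rightarrow> 'k::field) ring)"
  shows "k_alg_iso n (q :: nat \<Rightarrow> 'k) p id"
  using ring_iso_set_refl[of "Bn n q"] cls_eq_UNIV_if_not_ring[OF assms]
  unfolding k_alg_iso_def Bn_def Irel_eq_UNIV_if_not_ring[OF assms] by simp

context weighted_relabelling
begin

lemma relabel_image_Irel:
  fixes q p :: "nat \<Rightarrow> 'k"
  assumes R: "ring (path_ring n :: (path \<Rightarrow> 'k) ring)"
    and pq: "\<And>i. i < n \<Longrightarrow> p (\<sigma> i) * b i = q i * b (Suc i mod n)"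
  shows "\<Phi> ` Irel n q = Irel n p"
proof -
  let ?A = "{rel n q i | i. i < n}" and ?B = "{rel n p i | i. i < n}"
  have A: "?A \<subseteq> carrier (path_ring n)" and B: "?B \<subseteq> carrier (path_ring n)"
    using rel_in_carrier by blast+
  have "\<Phi> ` ?A \<subseteq> Irel n p"
  proof
    fix x assume "x \<in> \<Phi> ` ?A"
    then obtain i where "i < n" "x = smul (b i) (rel n p (\<sigma> i))" using relabel_rel pq by blast
    then show "x \<in> Irel n p"
      using \<sigma>_less smul_in_ideal[OF Irel_ideal[OF R]] ring.genideal_self[OF R B]
      unfolding Irel_def by blast
  qed
  moreover have "\<Psi> ` ?B \<subseteq> Irel n q"
  proof
    fix x assume "x \<in> \<Psi> ` ?B"
    then obtain j where j: "j < n" "x = \<Psi> (rel n p j)" by auto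
    define i where "i = \<tau> j"
    have i: "i < n" "\<sigma> i = j" using j \<tau>_less inv_right by (auto simp: i_def)
    have "\<Phi> (smul (inverse (b i)) (rel n q i)) = rel n p j"
      using relabel_rel[where p = p and q = q, OF i(1) pq[OF i(1)]] b_nonzero[OF i(1)] i(2)
      by (simp add: relabel_smul smul_smul)
    then have "x = \<Psi> (\<Phi> (smul (inverse (b i)) (rel n q i)))" using j by simp
    also have "\<dots> = smul (inverse (b i)) (rel n q i)"
      by (rule relabel_left_inverse[OF smul_in_carrier[OF rel_in_carrier[OF i(1)]]])
    finally show "x \<in> Irel n q"
      using i smul_in_ideal[OF Irel_ideal[OF R]] ring.genideal_self[OF R A] unfolding Irel_def by blast
  qed
  moreover have "\<Phi> \<in> ring_hom (path_ring n) (path_ring n)" "\<Psi> \<in> ring_hom (path_ring n) (path_ring n)"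
    using relabel_ring_iso weighted_relabelling.relabel_ring_iso[OF weighted_relabelling_inverse]
    by (simp_all add: ring_iso_def)
  ultimately show ?thesis
    using image_genideal_eq[where h = \<Phi> and h' = \<Psi>, OF R R _ _ relabel_right_inverse A B]
    unfolding Irel_def by blast
qed

lemma k_alg_iso_relabel:
  fixes q p :: "nat \<Rightarrow> 'k"
  assumes pq: "\<And>i. i < n \<Longrightarrow> p (\<sigma> i) * b i = q i * b (Suc i mod n)"
  shows "\<exists>h. k_alg_iso n q p h \<and> (\<forall>f \<in> carrier (path_ring n). h (cls n q f) = cls n p (\<Phi> f))"
proof (cases "ring (path_ring n :: (path \<Rightarrow> 'k) ring)")
  case False
  then show ?thesis using k_alg_iso_id_if_not_ring cls_eq_UNIV_if_not_ring by (metis id_apply)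
next
  case R: True
  obtain h where h: "h \<in> ring_iso (Bn n q) (Bn n p)"
    and h_cls: "\<forall>f \<in> carrier (path_ring n). h (cls n q f) = cls n p (\<Phi> f)"
    using FactRing_iso_of_ring_iso[OF R R relabel_ring_iso Irel_ideal[OF R] Irel_ideal[OF R]
        relabel_image_Irel[OF R pq]]
    unfolding Bn_def cls_def by blast
  moreover have "\<Phi> (smul c \<one>\<^bsub>path_ring n\<^esub>) = smul c \<one>\<^bsub>path_ring n\<^esub>" for c
    by (simp add: relabel_smul relabel_one)
  ultimately show ?thesis using smul_one_in_carrier unfolding k_alg_iso_def by metis
qed

lemma k_alg_iso_relabel_generators:
  fixes q p :: "nat \<Rightarrow> 'k"
  assumes pq: "\<And>i. i < n \<Longrightarrow> p (\<sigma> i) * b i = q i * b (Suc i mod n)"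
  shows "\<exists>h. k_alg_iso n q p h \<and>
    (\<forall>i<n. h (cls n q (vtx n i)) = cls n p (vtx n (\<sigma> i)) \<and>
           h (cls n q (arrA n i)) = cls n p (arrA n (\<sigma> i)) \<and>
           h (cls n q (loopB n i)) = cls n p (smul (b i) (loopB n (\<sigma> i))))"
proof -
  obtain h where h: "k_alg_iso n q p h"
    and h_cls: "\<forall>f \<in> carrier (path_ring n). h (cls n q f) = cls n p (\<Phi> f)"
    using k_alg_iso_relabel[OF pq] by blast
  have "h (cls n q (pth r)) = cls n p (\<Phi> (pth r))" if "valid_path n r" for r
    using h_cls pth_in_carrier[OF that] by blast
  then have "h (cls n q (vtx n i)) = cls n p (vtx n (\<sigma> i)) \<and>
        h (cls n q (arrA n i)) = cls n p (arrA n (\<sigma> i)) \<and>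
        h (cls n q (loopB n i)) = cls n p (smul (b i) (loopB n (\<sigma> i)))" if i: "i < n" for i
    using i \<sigma>_less[OF i]
    by (simp add: vtx_def arrA_def loopB_def valid_path_def relabel_pth map_path_def loop_weight_def)
  then show ?thesis using h by blast
qed

end

lemma k_alg_iso_rescale_loops:
  fixes q \<alpha> :: "nat \<Rightarrow> 'k::field"
  assumes \<alpha>: "\<forall>i<n. \<alpha> i \<noteq> 0"
  defines "p \<equiv> \<lambda>i. \<alpha> (Suc i mod n) / \<alpha> i * q i"
  shows "\<exists>h. k_alg_iso n q p h \<and>
    (\<forall>i<n. h (cls n q (vtx n i)) = cls n p (vtx n i) \<and>
           h (cls n q (arrA n i)) = cls n p (arrA n i) \<and>
           h (cls n q (loopB n i)) = cls n p (smul (\<alpha> i) (loopB n i)))"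
proof -
  interpret weighted_relabelling n id id \<alpha>
    by unfold_locales (use \<alpha> in auto)
  have pq: "p (id i) * \<alpha> i = q i * \<alpha> (Suc i mod n)" if "i < n" for i
    using \<alpha> that by (simp add: p_def)
  show ?thesis using k_alg_iso_relabel_generators[OF pq] by simp
qed

definition cyc_succ :: "nat \<Rightarrow> nat \<Rightarrow> nat" where
  "cyc_succ n i = (if i < n then Suc i mod n else i)"

definition cyc_pred :: "nat \<Rightarrow> nat \<Rightarrow> nat" where
  "cyc_pred n i = (if i < n then (i + n - 1) mod n else i)"

lemma pred_mod_Suc_mod: "i < n \<Longrightarrow> (Suc i mod n + n - 1) mod n = i"
  by (cases "Suc i = n") auto

lemma Suc_mod_pred_mod: "j < n \<Longrightarrow> Suc ((j + n - 1) mod n) mod n = j"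
  by (cases j) (auto simp: mod_if)

lemma cyclic_relabelling_rotate: "0 < n \<Longrightarrow> cyclic_relabelling n (cyc_succ n) (cyc_pred n)"
  by unfold_locales
    (auto simp: cyc_succ_def cyc_pred_def pred_mod_Suc_mod[simplified] Suc_mod_pred_mod[simplified])

lemma k_alg_iso_rotate:
  fixes q :: "nat \<Rightarrow> 'k::field"
  assumes n: "0 < n"
  defines "p \<equiv> \<lambda>i. q ((i + n - 1) mod n)"
  shows "\<exists>h. k_alg_iso n q p h \<and>
    (\<forall>i<n. h (cls n q (vtx n i)) = cls n p (vtx n (Suc i)) \<and>
           h (cls n q (arrA n i)) = cls n p (arrA n (Suc i)) \<and>
           h (cls n q (loopB n i)) = cls n p (loopB n (Suc i)))"
proof -
  interpret weighted_relabelling n "cyc_succ n" "cyc_pred n" "\<lambda>_. 1 :: 'k"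
    by (simp add: weighted_relabelling_def weighted_relabelling_axioms_def cyclic_relabelling_rotate[OF n])
  have pq: "p (cyc_succ n i) * 1 = q i * 1" if "i < n" for i
    using that by (simp add: p_def cyc_succ_def pred_mod_Suc_mod[OF that, simplified])
  show ?thesis
    using k_alg_iso_relabel_generators[where q = q and p = p, OF pq]
    by (simp add: cyc_succ_def vtx_def arrA_def loopB_def)
qed

theorem lemma2p9:
  fixes n :: nat and q \<alpha> :: "nat \<Rightarrow> 'k::field_char_0"
  assumes "alg_closed TYPE('k)"
    and "n \<ge> 2"
    and "\<forall>i<n. q i \<noteq> 0"
    and "\<forall>i<n. \<alpha> i \<noteq> 0"
  shows "(\<exists>h. k_alg_iso n q (\<lambda>i. \<alpha> (Suc i mod n) / \<alpha> i * q i) h \<and>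
            (\<forall>i<n. h (cls n q (vtx n i)) = cls n (\<lambda>i. \<alpha> (Suc i mod n) / \<alpha> i * q i) (vtx n i) \<and>
                   h (cls n q (arrA n i)) = cls n (\<lambda>i. \<alpha> (Suc i mod n) / \<alpha> i * q i) (arrA n i) \<and>
                   h (cls n q (loopB n i)) = cls n (\<lambda>i. \<alpha> (Suc i mod n) / \<alpha> i * q i) (smul (\<alpha> i) (loopB n i))))
       \<and> (\<exists>h. k_alg_iso n q (\<lambda>i. q ((i + n - 1) mod n)) h \<and>
            (\<forall>i<n. h (cls n q (vtx n i)) = cls n (\<lambda>i. q ((i + n - 1) mod n)) (vtx n (Suc i)) \<and>
                   h (cls n q (arrA n i)) = cls n (\<lambda>i. q ((i + n - 1) mod n)) (arrA n (Suc i)) \<and>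
                   h (cls n q (loopB n i)) = cls n (\<lambda>i. q ((i + n - 1) mod n)) (loopB n (Suc i))))"
  using k_alg_iso_rescale_loops[OF assms(4)] k_alg_iso_rotate[of n q] assms(2) by simp

end
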